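(* Let $-\pi/2<\alpha<\pi/2$ and $\lambda<1$. Then $$\{J[f]: f\in \mathcal{S}^*_\alpha(\lambda)\}=\{I_{e^{-i\alpha}\cos\alpha}[k]: k\in\mathcal{K}(\lambda)\}.$$
   Context: $\mathbb{D}$ is the open unit disk and $\mathcal{A}$ the class of analytic $f$ on $\mathbb{D}$ with $f(0)=0$, $f'(0)=1$. For $\alpha\in(-\pi/2,\pi/2)$ and $\lambda<1$, $\mathcal{S}^*_\alpha(\lambda)=\{f\in\mathcal{A}: f(z)\neq 0 \text{ for } z\in\mathbb{D}\setminus\{0\},\ \mathrm{Re}\,(e^{i\alpha}zf'(z)/f(z))>\lambda\cos\alpha \text{ on }\mathbb{D}\}$. $\mathcal{K}(\lambda)=\{f\in\mathcal{A}: f'\neq0,\ \mathrm{Re}\,(1+zf''(z)/f'(z))>\lambda \text{ on }\mathbb{D}\}$. The Alexander transform is $J[f](z)=\int_0^z f(w)/w\,dw$. For $\gamma\in\mathbb{C}$ and $f\in\mathcal{A}$ with $f'$ nonvanishing, $I_\gamma[f](z)=\int_0^z\{f'(w)\}^\gamma dw$ with the branch of $\{f'(w)\}^\gamma=\exp(\gamma\log f'(w))$ chosen so that $\{f'(0)\}^\gamma=1$. *)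

theory Defs
  imports "HOL-Complex_Analysis.Complex_Analysis"
begin

abbreviation unit_disk :: "complex set" where
  "unit_disk \<equiv> ball 0 1"

definition class_A :: "(complex \<Rightarrow> complex) set" where
  "class_A = {f. f holomorphic_on unit_disk \<and> f 0 = 0 \<and> deriv f 0 = 1}"

text \<open>The quotient z f'(z)/f(z) has a removable
  singularity at 0 (value 1); the condition is imposed at the points z ~= 0, where the
  quotient is literally defined (at 0 it holds automatically since lambda < 1).\<close>
definition spirallike :: "real \<Rightarrow> real \<Rightarrow> (complex \<Rightarrow> complex) set" where
  "spirallike \<alpha> lam = {f. f \<in> class_A \<and>
     (\<forall>z\<in>unit_disk - {0}. f z \<noteq> 0) \<and>
     (\<forall>z\<in>unit_disk - {0}. Re (exp (\<i> * of_real \<alpha>) * z * deriv f z / f z) > lam * cos \<alpha>)}"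

definition convex_order :: "real \<Rightarrow> (complex \<Rightarrow> complex) set" where
  "convex_order lam = {f. f \<in> class_A \<and>
     (\<forall>z\<in>unit_disk. deriv f z \<noteq> 0) \<and>
     (\<forall>z\<in>unit_disk. Re (1 + z * deriv (deriv f) z / deriv f z) > lam)}"

definition alexander :: "(complex \<Rightarrow> complex) \<Rightarrow> complex \<Rightarrow> complex" where
  "alexander f z = contour_integral (linepath 0 z) (\<lambda>w. f w / w)"

text \<open>The branch of log f' on the disk vanishing at 0.\<close>
definition log_deriv_branch :: "(complex \<Rightarrow> complex) \<Rightarrow> complex \<Rightarrow> complex" where
  "log_deriv_branch f = (SOME L. L holomorphic_on unit_disk \<and> L 0 = 0 \<and>
       (\<forall>w\<in>unit_disk. exp (L w) = deriv f w))"

text \<open>I_gamma[f](z) = integral from 0 to z of (f'(w))^gamma dw.\<close>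
definition I_transform :: "complex \<Rightarrow> (complex \<Rightarrow> complex) \<Rightarrow> complex \<Rightarrow> complex" where
  "I_transform \<gamma> f z = contour_integral (linepath 0 z) (\<lambda>w. exp (\<gamma> * log_deriv_branch f w))"

end

theory Submission
  imports Defs
begin

(* A function f in S*_alpha(lambda) has a simple zero at 0 and no other zeros, so
   f(z) = z exp(L(z)) with L(0) = 0; then J[f](z) is the integral of exp(L) from 0 to z and
   z f'/f = 1 + z L'. A function k in K(lambda) has k' = exp(M) with M(0) = 0; then
   I_gamma[k](z) is the integral of exp(gamma M) and 1 + z k''/k' = 1 + z M'. For
   gamma = exp(-i alpha) cos alpha, the substitution L = gamma M is a bijection between the two
   kinds of logarithms, and Re(exp(i alpha) (1 + gamma q)) = cos alpha Re(1 + q) with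
   cos alpha > 0 turns either defining inequality into the other (at z = 0 the convexity
   inequality is Re 1 > lambda, true since lambda < 1). *)

lemma has_field_derivative_contour_integral_linepath:
  fixes f :: "complex \<Rightarrow> complex"
  assumes S: "convex S" "open S" and f: "f holomorphic_on S" and a: "a \<in> S" and z: "z \<in> S"
  shows "((\<lambda>z. contour_integral (linepath a z) f) has_field_derivative f z) (at z)"
proof -
  have "((\<lambda>z. contour_integral (linepath a z) f) has_field_derivative f z) (at z within S)"
  proof (rule triangle_contour_integrals_convex_primitive[OF _ a S(1) z])
    show "continuous_on S f"
      using f by (rule holomorphic_on_imp_continuous_on)
    fix b c assume "b \<in> S" "c \<in> S"
    let ?g = "linepath a b +++ linepath b c +++ linepath c a"
    have "path_image ?g \<subseteq> S"
      using a \<open>b \<in> S\<close> \<open>c \<in> S\<close> S(1) by (simp add: path_image_join closed_segment_subset)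
    then have "(f has_contour_integral 0) ?g"
      by (intro Cauchy_theorem_convex_simple[OF f S(1)]) auto
    then show "contour_integral (linepath a b) f + contour_integral (linepath b c) f +
               contour_integral (linepath c a) f = 0"
      by (rule has_chain_integral_chain_integral3)
  qed
  then show ?thesis
    using at_within_open[OF z S(2)] by simp
qed

lemma holomorphic_logarithm_exists_normalized:
  assumes "convex S" "open S" "f holomorphic_on S" "\<And>w. w \<in> S \<Longrightarrow> f w \<noteq> 0"
    and "a \<in> S" "f a = 1"
  obtains L where "L holomorphic_on S" "L a = 0" "\<And>w. w \<in> S \<Longrightarrow> exp (L w) = f w"
proof -
  obtain g where g: "g holomorphic_on S" "\<And>w. w \<in> S \<Longrightarrow> exp (g w) = f w"
    using holomorphic_logarithm_exists[OF assms(1-5)] by blast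
  show ?thesis
  proof
    show "(\<lambda>w. g w - g a) holomorphic_on S"
      using g(1) by (intro holomorphic_intros)
    show "g a - g a = 0"
      by simp
    fix w assume "w \<in> S"
    then show "exp (g w - g a) = f w"
      using g(2) assms(5,6) by (simp add: exp_diff)
  qed
qed

lemma deriv_exp_comp_holomorphic:
  assumes S: "open S" and L: "L holomorphic_on S"
    and F: "\<And>w. w \<in> S \<Longrightarrow> F w = exp (L w)" and z: "z \<in> S"
  shows "deriv F z = deriv L z * F z"
proof -
  have "((\<lambda>w. exp (L w)) has_field_derivative exp (L z) * deriv L z) (at z)"
    using holomorphic_derivI[OF L S z] by (auto intro!: derivative_eq_intros)
  then have "(F has_field_derivative exp (L z) * deriv L z) (at z)"
    by (rule has_field_derivative_transform_within_open[OF _ S z]) (simp add: F)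
  then show ?thesis
    using F[OF z] by (simp add: DERIV_imp_deriv mult.commute)
qed

lemma holomorphic_logarithm_unique:
  assumes S: "connected S" "open S" and L: "L1 holomorphic_on S" "L2 holomorphic_on S"
    and exp_eq: "\<And>w. w \<in> S \<Longrightarrow> exp (L1 w) = exp (L2 w)"
    and a: "a \<in> S" "L1 a = L2 a" and z: "z \<in> S"
  shows "L1 z = L2 z"
proof -
  have "DERIV (\<lambda>w. L1 w - L2 w) w :> 0" if w: "w \<in> S" for w
  proof -
    have "deriv (\<lambda>w. exp (L1 w)) w = deriv L1 w * exp (L1 w)"
      by (rule deriv_exp_comp_holomorphic[OF S(2) L(1) _ w]) simp
    moreover have "deriv (\<lambda>w. exp (L1 w)) w = deriv L2 w * exp (L1 w)"
      by (rule deriv_exp_comp_holomorphic[OF S(2) L(2) _ w]) (simp add: exp_eq)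
    ultimately have "deriv L1 w - deriv L2 w = 0"
      by simp
    moreover have "DERIV (\<lambda>w. L1 w - L2 w) w :> deriv L1 w - deriv L2 w"
      using holomorphic_derivI[OF L(1) S(2) w] holomorphic_derivI[OF L(2) S(2) w]
      by (rule DERIV_diff)
    ultimately show ?thesis
      by simp
  qed
  moreover have "continuous_on S (\<lambda>w. L1 w - L2 w)"
    using L by (intro holomorphic_on_imp_continuous_on holomorphic_intros)
  ultimately obtain c where "\<And>w. w \<in> S \<Longrightarrow> L1 w - L2 w = c"
    using DERIV_zero_connected_constant[OF S finite.emptyI] by blast
  then have "L1 z - L2 z = L1 a - L2 a"
    using a(1) z by metis
  with a(2) show ?thesis
    by simp
qed

lemma log_deriv_branch_unique:
  assumes L: "L holomorphic_on unit_disk" "L 0 = 0" "\<And>w. w \<in> unit_disk \<Longrightarrow> exp (L w) = deriv f w"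
    and z: "z \<in> unit_disk"
  shows "log_deriv_branch f z = L z"
proof -
  let ?P = "\<lambda>L. L holomorphic_on unit_disk \<and> L 0 = 0 \<and> (\<forall>w\<in>unit_disk. exp (L w) = deriv f w)"
  have "?P (log_deriv_branch f)"
    unfolding log_deriv_branch_def by (rule someI[of ?P L]) (use L in blast)
  then have branch: "log_deriv_branch f holomorphic_on unit_disk" "log_deriv_branch f 0 = 0"
    "\<And>w. w \<in> unit_disk \<Longrightarrow> exp (log_deriv_branch f w) = deriv f w"
    by auto
  show ?thesis
    by (rule holomorphic_logarithm_unique[OF connected_ball open_ball branch(1) L(1) _ _ _ z, where a = 0])
      (simp_all add: branch(2,3) L(2,3))
qed

lemma I_transform_eq_contour_integral_exp:
  assumes "L holomorphic_on unit_disk" "L 0 = 0" "\<And>w. w \<in> unit_disk \<Longrightarrow> exp (L w) = deriv k w"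
    and z: "z \<in> unit_disk"
  shows "I_transform \<gamma> k z = contour_integral (linepath 0 z) (\<lambda>w. exp (\<gamma> * L w))"
  unfolding I_transform_def
proof (rule contour_integral_eq)
  fix w assume "w \<in> path_image (linepath 0 z)"
  moreover have "closed_segment 0 z \<subseteq> unit_disk"
    using z by (simp add: closed_segment_subset)
  ultimately have "w \<in> unit_disk"
    by auto
  then show "exp (\<gamma> * log_deriv_branch k w) = exp (\<gamma> * L w)"
    using log_deriv_branch_unique[OF assms(1-3)] by simp
qed

lemma alexander_eq_contour_integral:
  assumes "\<And>w. w \<in> closed_segment 0 z \<Longrightarrow> f w = w * g w"
  shows "alexander f z = contour_integral (linepath 0 z) g"
proof (cases "z = 0")
  case False
  have "contour_integral (linepath 0 z) (\<lambda>w. f w / w) = contour_integral (linepath 0 z) g"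
  proof (rule contour_integral_spike_finite_simple_path[where A = "{0}"])
    show "simple_path (linepath 0 z)"
      by (rule simple_path_linepath) (use False in simp)
    fix w assume "w \<in> path_image (linepath 0 z) - {0}"
    then show "f w / w = g w"
      using assms by auto
  qed auto
  then show ?thesis
    unfolding alexander_def .
qed (simp add: alexander_def)

lemma Re_exp_rotation:
  fixes \<alpha> :: real
  shows "Re (exp (\<i> * of_real \<alpha>) * (1 + exp (- (\<i> * of_real \<alpha>)) * of_real (cos \<alpha>) * q))
           = cos \<alpha> * Re (1 + q)"
proof -
  have "exp (\<i> * of_real \<alpha>) * (1 + exp (- (\<i> * of_real \<alpha>)) * of_real (cos \<alpha>) * q)
          = exp (\<i> * of_real \<alpha>) + of_real (cos \<alpha>) * q"
    by (simp add: algebra_simps exp_minus)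
  also have "Re \<dots> = cos \<alpha> * Re (1 + q)"
    by (simp add: Re_exp algebra_simps)
  finally show ?thesis .
qed

lemma deriv_mult_exp:
  assumes S: "open S" and L: "L holomorphic_on S"
    and f: "\<And>w. w \<in> S \<Longrightarrow> f w = w * exp (L w)" and z: "z \<in> S"
  shows "deriv f z = exp (L z) * (1 + z * deriv L z)"
proof -
  have "((\<lambda>w. w * exp (L w)) has_field_derivative exp (L z) * (1 + z * deriv L z)) (at z)"
    using holomorphic_derivI[OF L S z] by (auto intro!: derivative_eq_intros simp: algebra_simps)
  then have "(f has_field_derivative exp (L z) * (1 + z * deriv L z)) (at z)"
    by (rule has_field_derivative_transform_within_open[OF _ S z]) (simp add: f)
  then show ?thesis
    by (rule DERIV_imp_deriv)
qed

lemma deriv_quotient_mult_exp: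
  assumes "open S" "L holomorphic_on S" "\<And>w. w \<in> S \<Longrightarrow> f w = w * exp (L w)"
    and z: "z \<in> S" "z \<noteq> 0"
  shows "z * deriv f z / f z = 1 + z * deriv L z"
  using deriv_mult_exp[OF assms(1-3) z(1)] assms(3)[OF z(1)] z(2) by simp

lemma convexity_quotient_exp_deriv:
  assumes "open S" "L holomorphic_on S" "\<And>w. w \<in> S \<Longrightarrow> exp (L w) = deriv k w" and z: "z \<in> S"
  shows "1 + z * deriv (deriv k) z / deriv k z = 1 + z * deriv L z"
proof -
  have "deriv (deriv k) z = deriv L z * deriv k z"
    by (rule deriv_exp_comp_holomorphic[OF assms(1,2) _ z]) (simp add: assms(3))
  moreover have "deriv k z \<noteq> 0"
    using assms(3)[OF z] by (metis exp_not_eq_zero)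
  ultimately show ?thesis
    by simp
qed

lemma holomorphic_simple_zero_exp_factor:
  assumes S: "convex S" "open S" "0 \<in> S" and f: "f holomorphic_on S" "f 0 = 0" "deriv f 0 = 1"
    and nz: "\<And>w. w \<in> S - {0} \<Longrightarrow> f w \<noteq> 0"
  obtains L where "L holomorphic_on S" "L 0 = 0" "\<And>w. w \<in> S \<Longrightarrow> f w = w * exp (L w)"
proof -
  define h where "h = (\<lambda>w. if w = 0 then deriv f 0 else (f w - f 0) / (w - 0))"
  have "h holomorphic_on S"
    unfolding h_def by (rule pole_lemma_open[OF f(1) S(2)])
  moreover have "h w \<noteq> 0" if "w \<in> S" for w
    using nz[of w] that f(2,3) by (auto simp: h_def)
  moreover have "h 0 = 1"
    using f(3) by (simp add: h_def)
  ultimately obtain L where L: "L holomorphic_on S" "L 0 = 0" "\<And>w. w \<in> S \<Longrightarrow> exp (L w) = h w"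
    using holomorphic_logarithm_exists_normalized[OF S(1,2) _ _ S(3)] by metis
  show ?thesis
  proof (rule that[OF L(1,2)])
    fix w assume "w \<in> S"
    then show "f w = w * exp (L w)"
      using L(3)[of w] f(2) by (cases "w = 0") (auto simp: h_def)
  qed
qed

lemma spirallike_imp_mult_exp:
  assumes "f \<in> spirallike \<alpha> lam"
  obtains L where "L holomorphic_on unit_disk" "L 0 = 0" "\<And>w. w \<in> unit_disk \<Longrightarrow> f w = w * exp (L w)"
    "\<And>z. z \<in> unit_disk - {0} \<Longrightarrow> Re (exp (\<i> * of_real \<alpha>) * (1 + z * deriv L z)) > lam * cos \<alpha>"
proof -
  have f: "f holomorphic_on unit_disk" "f 0 = 0" "deriv f 0 = 1"
      "\<And>z. z \<in> unit_disk - {0} \<Longrightarrow> f z \<noteq> 0"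
    and Re_f: "\<And>z. z \<in> unit_disk - {0} \<Longrightarrow>
                 Re (exp (\<i> * of_real \<alpha>) * z * deriv f z / f z) > lam * cos \<alpha>"
    using assms unfolding spirallike_def class_A_def by auto
  obtain L where L: "L holomorphic_on unit_disk" "L 0 = 0" "\<And>w. w \<in> unit_disk \<Longrightarrow> f w = w * exp (L w)"
    using holomorphic_simple_zero_exp_factor[OF convex_ball open_ball _ f] by auto
  show ?thesis
  proof (rule that[OF L])
    fix z assume z: "z \<in> unit_disk - {0}"
    then have "z * deriv f z / f z = 1 + z * deriv L z"
      using deriv_quotient_mult_exp[OF open_ball L(1,3)] by auto
    then have "exp (\<i> * of_real \<alpha>) * z * deriv f z / f z = exp (\<i> * of_real \<alpha>) * (1 + z * deriv L z)"
      by (metis mult.assoc times_divide_eq_right)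
    with Re_f[OF z] show "Re (exp (\<i> * of_real \<alpha>) * (1 + z * deriv L z)) > lam * cos \<alpha>"
      by simp
  qed
qed

lemma mult_exp_in_spirallike:
  assumes L: "L holomorphic_on unit_disk" "L 0 = 0"
    and Re_L: "\<And>z. z \<in> unit_disk - {0} \<Longrightarrow>
                 Re (exp (\<i> * of_real \<alpha>) * (1 + z * deriv L z)) > lam * cos \<alpha>"
  shows "(\<lambda>w. w * exp (L w)) \<in> spirallike \<alpha> lam"
  unfolding spirallike_def class_A_def
proof (intro CollectI conjI ballI)
  show "(\<lambda>w. w * exp (L w)) holomorphic_on unit_disk"
    using L(1) by (intro holomorphic_intros)
  show "0 * exp (L 0) = 0"
    by simp
  show "deriv (\<lambda>w. w * exp (L w)) 0 = 1"
    using deriv_mult_exp[OF open_ball L(1), of "\<lambda>w. w * exp (L w)" 0] L(2) by simp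
  fix z assume z: "z \<in> unit_disk - {0}"
  then show "z * exp (L z) \<noteq> 0"
    by simp
  have "z * deriv (\<lambda>w. w * exp (L w)) z / (z * exp (L z)) = 1 + z * deriv L z"
    using deriv_quotient_mult_exp[OF open_ball L(1), of "\<lambda>w. w * exp (L w)" z] z by simp
  then have "exp (\<i> * of_real \<alpha>) * z * deriv (\<lambda>w. w * exp (L w)) z / (z * exp (L z))
               = exp (\<i> * of_real \<alpha>) * (1 + z * deriv L z)"
    by (metis mult.assoc times_divide_eq_right)
  with Re_L[OF z]
  show "Re (exp (\<i> * of_real \<alpha>) * z * deriv (\<lambda>w. w * exp (L w)) z / (z * exp (L z))) > lam * cos \<alpha>"
    by simp
qed

lemma convex_order_imp_log_deriv:
  assumes "k \<in> convex_order lam"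
  obtains L where "L holomorphic_on unit_disk" "L 0 = 0"
    "\<And>w. w \<in> unit_disk \<Longrightarrow> exp (L w) = deriv k w"
    "\<And>z. z \<in> unit_disk \<Longrightarrow> Re (1 + z * deriv L z) > lam"
proof -
  have k: "k holomorphic_on unit_disk" "deriv k 0 = 1" "\<And>z. z \<in> unit_disk \<Longrightarrow> deriv k z \<noteq> 0"
    and Re_k: "\<And>z. z \<in> unit_disk \<Longrightarrow> Re (1 + z * deriv (deriv k) z / deriv k z) > lam"
    using assms unfolding convex_order_def class_A_def by auto
  obtain L where L: "L holomorphic_on unit_disk" "L 0 = 0"
      "\<And>w. w \<in> unit_disk \<Longrightarrow> exp (L w) = deriv k w"
    using holomorphic_logarithm_exists_normalized[OF convex_ball open_ball
        holomorphic_deriv[OF k(1) open_ball] k(3) _ k(2)]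
    by auto
  show ?thesis
  proof (rule that[OF L])
    fix z assume z: "z \<in> unit_disk"
    show "Re (1 + z * deriv L z) > lam"
      using Re_k[OF z] convexity_quotient_exp_deriv[OF open_ball L(1,3) z] by simp
  qed
qed

lemma exp_primitive_in_convex_order:
  assumes M: "M holomorphic_on unit_disk" "M 0 = 0"
    and Re_M: "\<And>z. z \<in> unit_disk \<Longrightarrow> Re (1 + z * deriv M z) > lam"
  defines "k \<equiv> \<lambda>z. contour_integral (linepath 0 z) (\<lambda>w. exp (M w))"
  shows "k \<in> convex_order lam" and "\<And>w. w \<in> unit_disk \<Longrightarrow> exp (M w) = deriv k w"
proof -
  have k': "(k has_field_derivative exp (M w)) (at w)" if "w \<in> unit_disk" for w
    unfolding k_def using M(1) that
    by (intro has_field_derivative_contour_integral_linepath holomorphic_intros) auto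
  show dk: "exp (M w) = deriv k w" if "w \<in> unit_disk" for w
    using DERIV_imp_deriv[OF k'[OF that]] by simp
  show "k \<in> convex_order lam"
    unfolding convex_order_def class_A_def
  proof (intro CollectI conjI ballI)
    show "k holomorphic_on unit_disk"
      using k' holomorphic_on_open[OF open_ball] by blast
    show "k 0 = 0"
      by (simp add: k_def)
    show "deriv k 0 = 1"
      using dk[of 0] M(2) by simp
    fix z assume z: "z \<in> unit_disk"
    show "deriv k z \<noteq> 0"
      using dk[OF z] by (metis exp_not_eq_zero)
    show "Re (1 + z * deriv (deriv k) z / deriv k z) > lam"
      using Re_M[OF z] convexity_quotient_exp_deriv[OF open_ball M(1) dk z] by simp
  qed
qed

lemma spirallike_alexander_eq_I_transform:
  fixes \<alpha> lam :: real
  assumes cos: "cos \<alpha> > 0" and lam: "lam < 1" and f: "f \<in> spirallike \<alpha> lam"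
  obtains k where "k \<in> convex_order lam"
    "restrict (alexander f) unit_disk
       = restrict (I_transform (exp (- (\<i> * of_real \<alpha>)) * of_real (cos \<alpha>)) k) unit_disk"
proof -
  define \<gamma> where "\<gamma> = exp (- (\<i> * of_real \<alpha>)) * of_real (cos \<alpha>)"
  have "\<gamma> \<noteq> 0"
    using cos by (simp add: \<gamma>_def)
  obtain L where L: "L holomorphic_on unit_disk" "L 0 = 0" "\<And>w. w \<in> unit_disk \<Longrightarrow> f w = w * exp (L w)"
    and Re_L: "\<And>z. z \<in> unit_disk - {0} \<Longrightarrow>
                 Re (exp (\<i> * of_real \<alpha>) * (1 + z * deriv L z)) > lam * cos \<alpha>"
    using spirallike_imp_mult_exp[OF f] by blast
  define M where "M = (\<lambda>w. L w / \<gamma>)"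
  have M: "M holomorphic_on unit_disk" "M 0 = 0"
    using L(1,2) by (auto simp: M_def intro!: holomorphic_intros)
  have Re_M: "Re (1 + z * deriv M z) > lam" if z: "z \<in> unit_disk" for z
  proof (cases "z = 0")
    case True
    then show ?thesis
      using lam by simp
  next
    case False
    have "deriv M z = deriv L z / \<gamma>"
      unfolding M_def using L(1) z
      by (intro deriv_cdivide_right holomorphic_on_imp_differentiable_at) auto
    then have "1 + z * deriv L z = 1 + \<gamma> * (z * deriv M z)"
      using \<open>\<gamma> \<noteq> 0\<close> by simp
    then have "Re (exp (\<i> * of_real \<alpha>) * (1 + z * deriv L z)) = cos \<alpha> * Re (1 + z * deriv M z)"
      unfolding \<gamma>_def by (simp only: Re_exp_rotation)
    moreover have "Re (exp (\<i> * of_real \<alpha>) * (1 + z * deriv L z)) > lam * cos \<alpha>"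
      using Re_L z False by blast
    ultimately show ?thesis
      using cos by (simp add: mult.commute)
  qed
  define k where "k = (\<lambda>z. contour_integral (linepath 0 z) (\<lambda>w. exp (M w)))"
  have k: "k \<in> convex_order lam" and dk: "\<And>w. w \<in> unit_disk \<Longrightarrow> exp (M w) = deriv k w"
    using exp_primitive_in_convex_order[OF M Re_M] unfolding k_def by blast+
  show ?thesis
  proof (rule that[OF k], rule restrict_ext)
    fix z assume z: "z \<in> unit_disk"
    then have "closed_segment 0 z \<subseteq> unit_disk"
      by (simp add: closed_segment_subset)
    then have "alexander f z = contour_integral (linepath 0 z) (\<lambda>w. exp (L w))"
      using L(3) by (intro alexander_eq_contour_integral) auto
    also have "\<dots> = I_transform \<gamma> k z"
      using I_transform_eq_contour_integral_exp[OF M dk z] \<open>\<gamma> \<noteq> 0\<close> by (simp add: M_def)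
    finally show "alexander f z = I_transform (exp (- (\<i> * of_real \<alpha>)) * of_real (cos \<alpha>)) k z"
      unfolding \<gamma>_def .
  qed
qed

lemma convex_order_I_transform_eq_alexander:
  fixes \<alpha> lam :: real
  assumes cos: "cos \<alpha> > 0" and k: "k \<in> convex_order lam"
  obtains f where "f \<in> spirallike \<alpha> lam"
    "restrict (alexander f) unit_disk
       = restrict (I_transform (exp (- (\<i> * of_real \<alpha>)) * of_real (cos \<alpha>)) k) unit_disk"
proof -
  define \<gamma> where "\<gamma> = exp (- (\<i> * of_real \<alpha>)) * of_real (cos \<alpha>)"
  obtain L where L: "L holomorphic_on unit_disk" "L 0 = 0" "\<And>w. w \<in> unit_disk \<Longrightarrow> exp (L w) = deriv k w"
    and Re_L: "\<And>z. z \<in> unit_disk \<Longrightarrow> Re (1 + z * deriv L z) > lam"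
    using convex_order_imp_log_deriv[OF k] by blast
  have "(\<lambda>w. w * exp (\<gamma> * L w)) \<in> spirallike \<alpha> lam"
  proof (rule mult_exp_in_spirallike)
    show "(\<lambda>w. \<gamma> * L w) holomorphic_on unit_disk"
      using L(1) by (intro holomorphic_intros)
    show "\<gamma> * L 0 = 0"
      using L(2) by simp
    fix z assume z: "z \<in> unit_disk - {0}"
    have "deriv (\<lambda>w. \<gamma> * L w) z = \<gamma> * deriv L z"
      using L(1) z by (intro deriv_cmult holomorphic_on_imp_differentiable_at) auto
    then have "Re (exp (\<i> * of_real \<alpha>) * (1 + z * deriv (\<lambda>w. \<gamma> * L w) z))
                 = cos \<alpha> * Re (1 + z * deriv L z)"
      using Re_exp_rotation[of \<alpha> "z * deriv L z"] by (simp add: \<gamma>_def mult.left_commute)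
    also have "\<dots> > cos \<alpha> * lam"
      using cos Re_L[of z] z by simp
    finally show "Re (exp (\<i> * of_real \<alpha>) * (1 + z * deriv (\<lambda>w. \<gamma> * L w) z)) > lam * cos \<alpha>"
      by (simp add: mult.commute)
  qed
  moreover have "restrict (alexander (\<lambda>w. w * exp (\<gamma> * L w))) unit_disk
                   = restrict (I_transform \<gamma> k) unit_disk"
  proof (rule restrict_ext)
    fix z assume z: "z \<in> unit_disk"
    have "alexander (\<lambda>w. w * exp (\<gamma> * L w)) z = contour_integral (linepath 0 z) (\<lambda>w. exp (\<gamma> * L w))"
      by (rule alexander_eq_contour_integral) simp
    also have "\<dots> = I_transform \<gamma> k z"
      by (rule I_transform_eq_contour_integral_exp[OF L z, symmetric])
    finally show "alexander (\<lambda>w. w * exp (\<gamma> * L w)) z = I_transform \<gamma> k z" .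
  qed
  ultimately show ?thesis
    unfolding \<gamma>_def by (rule that)
qed

theorem lemma2p2:
  fixes \<alpha> lam :: real
  assumes "- (pi / 2) < \<alpha>" and "\<alpha> < pi / 2" and "lam < 1"
  shows "{restrict (alexander f) unit_disk | f. f \<in> spirallike \<alpha> lam} =
         {restrict (I_transform (exp (- (\<i> * of_real \<alpha>)) * of_real (cos \<alpha>)) k) unit_disk
            | k. k \<in> convex_order lam}"
proof -
  have cos: "cos \<alpha> > 0"
    using assms(1,2) by (intro cos_gt_zero_pi) auto
  show ?thesis (is "?J = ?I")
  proof (intro equalityI subsetI)
    fix F assume "F \<in> ?J"
    then obtain f where f: "f \<in> spirallike \<alpha> lam" and F: "F = restrict (alexander f) unit_disk"
      by blast
    show "F \<in> ?I"
      using spirallike_alexander_eq_I_transform[OF cos assms(3) f] unfolding F by blast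
  next
    fix F assume "F \<in> ?I"
    then obtain k where k: "k \<in> convex_order lam"
      and F: "F = restrict (I_transform (exp (- (\<i> * of_real \<alpha>)) * of_real (cos \<alpha>)) k) unit_disk"
      by blast
    show "F \<in> ?J"
      using convex_order_I_transform_eq_alexander[OF cos k] unfolding F by (metis (mono_tags, lifting) mem_Collect_eq)
  qed
qed

end
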